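(* Let $N\in\mathbb{N}$, $k\ge3$ and $\rho>0$. Let $Z$ be a homogeneous polynomial of degree $k$ in $N$-normal form, and let $z(t)$ be a real solution in $\mathcal{L}_\rho$ of the Hamiltonian system associated with $H_0+Z$. Then, writing $\mathsf{R}^N_\rho(t)=\mathsf{R}^N_\rho(z(t))$, $$\mathsf{R}^N_\rho(t)\le\mathsf{R}^N_\rho(0)+4k^3\|Z\|\int_0^t\mathsf{R}^N_\rho(s)^2\|z(s)\|_\rho^{k-3}\,\mathrm{d}s$$ and $$\|z(t)\|_\rho\le\|z(0)\|_\rho+4k^3\|Z\|\int_0^t\mathsf{R}^N_\rho(s)^2\|z(s)\|_\rho^{k-3}\,\mathrm{d}s.$$
   Context: $\mathcal{Z}=\mathbb{Z}^d\times\{\pm1\}$; for $j=(a,\delta)$, $|j|=|a|$ and $\bar j=(a,-\delta)$; $z\in\mathbb{C}^{\mathcal{Z}}$ is identified with $(\xi,\eta)$ via $z_{(a,1)}=\xi_a$, $z_{(a,-1)}=\eta_a$; $z$ is real if $z_{\bar j}=\overline{z_j}$. $\mathcal{L}_\rho$: sequences with $\|z\|_\rho=\sum_je^{\rho|j|}|z_j|<\infty$. $H_0=\sum_{a\in\mathbb{Z}^d}\omega_a\xi_a\eta_a$ with real frequencies $\omega_a=|a|^2+v_a$. The Hamiltonian system of $H$ is $\dot\xi_a=-i\partial H/\partial\eta_a$, $\dot\eta_a=i\partial H/\partial\xi_a$. For ${\boldsymbol j}=(j_1,\dots,j_\ell)$ with $j_i=(a_i,\delta_i)$: $z_{\boldsymbol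 j}=z_{j_1}\cdots z_{j_\ell}$, $\mathcal{M}({\boldsymbol j})=\sum\delta_ia_i$, $\mathcal{I}_\ell=\{{\boldsymbol j}\in\mathcal{Z}^\ell:\mathcal{M}({\boldsymbol j})=0\}$. $\mathcal{P}_k$: real polynomials $P=\sum_{\ell=2}^k\sum_{{\boldsymbol j}\in\mathcal{I}_\ell}a_{\boldsymbol j}z_{\boldsymbol j}$ with $a_{\bar{\boldsymbol j}}=\overline{a_{\boldsymbol j}}$ and bounded coefficients, normed by $\|P\|=\sum_{\ell}\sup_{{\boldsymbol j}\in\mathcal{I}_\ell}|a_{\boldsymbol j}|$. ${\boldsymbol j}\in\mathcal{Z}^\ell$ is resonant (${\boldsymbol j}\in\mathcal{N}_\ell$) if $\ell$ is even and ${\boldsymbol j}$ is, up to order, $(i_1,\dots,i_{\ell/2},\bar i_1,\dots,\bar i_{\ell/2})$ for some $i_1,\dots,i_{\ell/2}\in\mathcal{Z}$. For ${\boldsymbol j}\in\mathcal{Z}^\ell$, $\ell\ge3$, $\mu({\boldsymbol j})$ is the third largest of $|j_1|,\dots,|j_\ell|$, and $\mathcal{J}_\ell(N)=\{{\boldsymbol j}\in\mathcal{I}_\ell:\mu({\boldsymbol j})>N\}$. $Z\in\mathcal{P}_k$ is in $N$-normal form if $Z=\sum_{\ell=3}^k\sum_{{\boldsymbol j}\in\mathcal{N}_\ell\cup\mathcal{J}_\ell(N)}a_{\boldsymbol j}z_{\boldsymbol j}$. Finally $\mathsf{R}^N_\rho(z)=\sum_{j\in\mathcal{Z},\,|j|>N}e^{\rho|j|}|z_j|$.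 *)

theory Defs
  imports "HOL-Analysis.Analysis" "HOL-Library.Multiset"
begin

text \<open>Index set Z = Z^d x {+1,-1}; the boolean True encodes delta = +1, False encodes delta = -1.
  z_(a,True) = xi_a, z_(a,False) = eta_a.\<close>
type_synonym ('d) idx = "(int ^ 'd) \<times> bool"

definition anorm :: "int ^ ('d::finite) \<Rightarrow> real" where
  "anorm a = sqrt (\<Sum>i\<in>UNIV. (real_of_int (a $ i))\<^sup>2)"

definition jnorm :: "('d::finite) idx \<Rightarrow> real" where
  "jnorm j = anorm (fst j)"

definition bar :: "'d idx \<Rightarrow> 'd idx" where
  "bar j = (fst j, \<not> snd j)"

definition in_L :: "real \<Rightarrow> (('d::finite) idx \<Rightarrow> complex) \<Rightarrow> bool" where
  "in_L \<rho> z \<longleftrightarrow> (\<lambda>j. exp (\<rho> * jnorm j) * cmod (z j)) summable_on UNIV"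

definition wnorm :: "real \<Rightarrow> (('d::finite) idx \<Rightarrow> complex) \<Rightarrow> real" where
  "wnorm \<rho> z = (\<Sum>\<^sub>\<infinity>j. exp (\<rho> * jnorm j) * cmod (z j))"

definition remainder :: "nat \<Rightarrow> real \<Rightarrow> (('d::finite) idx \<Rightarrow> complex) \<Rightarrow> real" where
  "remainder N \<rho> z = (\<Sum>\<^sub>\<infinity>j\<in>{j. jnorm j > real N}. exp (\<rho> * jnorm j) * cmod (z j))"

definition is_real_seq :: "('d idx \<Rightarrow> complex) \<Rightarrow> bool" where
  "is_real_seq z \<longleftrightarrow> (\<forall>j. z (bar j) = cnj (z j))"

definition momentum :: "'d idx list \<Rightarrow> int ^ 'd" where
  "momentum js = sum_list (map (\<lambda>(a, \<delta>). if \<delta> then a else - a) js)"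

definition mu :: "('d::finite) idx list \<Rightarrow> real" where
  "mu js = rev (sort (map jnorm js)) ! 2"

definition resonant :: "('d::finite) idx list \<Rightarrow> bool" where
  "resonant js \<longleftrightarrow> even (length js) \<and> (\<exists>is. mset js = mset (is @ map bar is))"

text \<open>A homogeneous polynomial of degree k in P_k, given by its coefficient family
  a_j, j in I_k (coefficients vanish outside I_k), real and bounded.\<close>
definition hom_poly :: "nat \<Rightarrow> (('d::finite) idx list \<Rightarrow> complex) \<Rightarrow> bool" where
  "hom_poly k c \<longleftrightarrow>
     (\<forall>js. (length js \<noteq> k \<or> momentum js \<noteq> 0) \<longrightarrow> c js = 0) \<and>
     (\<forall>js. c (map bar js) = cnj (c js)) \<and>
     bdd_above (range (\<lambda>js. cmod (c js)))"

definition normal_form :: "nat \<Rightarrow> nat \<Rightarrow> (('d::finite) idx list \<Rightarrow> complex) \<Rightarrow> bool" where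
  "normal_form N k c \<longleftrightarrow> hom_poly k c \<and>
     (\<forall>js. c js \<noteq> 0 \<longrightarrow> resonant js \<or> mu js > real N)"

definition pnorm :: "nat \<Rightarrow> (('d::finite) idx list \<Rightarrow> complex) \<Rightarrow> real" where
  "pnorm k c = (SUP js \<in> {js. length js = k \<and> momentum js = 0}. cmod (c js))"

definition poly_eval :: "nat \<Rightarrow> (('d::finite) idx list \<Rightarrow> complex) \<Rightarrow> ('d idx \<Rightarrow> complex) \<Rightarrow> complex" where
  "poly_eval k c z = (\<Sum>\<^sub>\<infinity>js\<in>{js. length js = k}. c js * prod_list (map z js))"

definition dpoly :: "nat \<Rightarrow> (('d::finite) idx list \<Rightarrow> complex) \<Rightarrow> ('d idx \<Rightarrow> complex) \<Rightarrow> 'd idx \<Rightarrow> complex" where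
  "dpoly k c z i = deriv (\<lambda>w. poly_eval k c (z(i := w))) (z i)"

definition omega :: "(int ^ ('d::finite) \<Rightarrow> real) \<Rightarrow> int ^ 'd \<Rightarrow> real" where
  "omega v a = (anorm a)\<^sup>2 + v a"

definition ham_solution ::
  "real \<Rightarrow> (int ^ ('d::finite) \<Rightarrow> real) \<Rightarrow> nat \<Rightarrow> ('d idx list \<Rightarrow> complex) \<Rightarrow> real \<Rightarrow>
   (real \<Rightarrow> 'd idx \<Rightarrow> complex) \<Rightarrow> bool" where
  "ham_solution \<rho> v k c T z \<longleftrightarrow>
     (\<forall>t\<in>{0..T}. in_L \<rho> (z t) \<and> is_real_seq (z t)) \<and>
     (\<forall>t\<in>{0..T}. ((\<lambda>s. wnorm \<rho> (\<lambda>j. z s j - z t j)) \<longlongrightarrow> 0) (at t within {0..T})) \<and>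
     (\<forall>t\<in>{0..T}. \<forall>a.
        ((\<lambda>s. z s (a, True)) has_vector_derivative
            (- \<i> * (of_real (omega v a) * z t (a, True) + dpoly k c (z t) (a, False))))
          (at t within {0..T}) \<and>
        ((\<lambda>s. z s (a, False)) has_vector_derivative
            (\<i> * (of_real (omega v a) * z t (a, False) + dpoly k c (z t) (a, True))))
          (at t within {0..T}))"

end

theory Submission
  imports Defs
begin

text \<open>
  Along the flow, \<open>H\<^sub>0\<close> and the resonant monomials of \<open>Z\<close> contribute to the equation for
  \<open>z\<^sub>j\<close> only a term \<open>i r z\<^sub>j\<close> with \<open>r\<close> real, which rotates \<open>z\<^sub>j\<close> without changing
  \<open>|z\<^sub>j|\<close>. Every other monomial of \<open>Z\<close> has at least three modes beyond \<open>N\<close>, so after one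
  differentiation at least two of them remain, and zero momentum bounds the weight \<open>exp (\<rho> |j|)\<close>
  of the differentiated mode by the product of the weights of the others. Hence the derivative of
  \<open>\<Sum>j\<in>F. exp (\<rho> |j|) |z\<^sub>j|\<close> is at most \<open>4 k\<^sup>3 \<parallel>Z\<parallel> (R\<^sup>N\<^sub>\<rho>)\<^sup>2 \<parallel>z\<parallel>\<^sub>\<rho>\<^bsup>k-3\<^esup>\<close> for every
  finite set \<open>F\<close> of modes; integrating and letting \<open>F\<close> exhaust the remainder modes, respectively
  all modes, gives the two estimates.
\<close>

lemma summable_on_sum:
  fixes f :: "'i \<Rightarrow> 'a \<Rightarrow> 'b::{topological_comm_monoid_add,t2_space}"
  assumes "finite I" "\<And>m. m \<in> I \<Longrightarrow> f m summable_on A"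
  shows "(\<lambda>x. \<Sum>m\<in>I. f m x) summable_on A"
  using assms by (induction I rule: finite_induct) (auto intro: summable_on_add)

lemma infsum_sum:
  fixes f :: "'i \<Rightarrow> 'a \<Rightarrow> 'b::{topological_comm_monoid_add,t2_space}"
  assumes "finite I" "\<And>m. m \<in> I \<Longrightarrow> f m summable_on A"
  shows "infsum (\<lambda>x. \<Sum>m\<in>I. f m x) A = (\<Sum>m\<in>I. infsum (f m) A)"
  using assms by (induction I rule: finite_induct) (auto simp: infsum_add summable_on_sum)

lemma has_sum_finite_partition:
  fixes f :: "'a \<Rightarrow> 'b::topological_comm_monoid_add"
  assumes "finite M" "\<And>x. P x \<Longrightarrow> n x \<in> M"
    and "\<And>m. m \<in> M \<Longrightarrow> (f has_sum s m) {x. P x \<and> n x = m}"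
  shows "(f has_sum (\<Sum>m\<in>M. s m)) {x. P x}"
proof -
  have "(f has_sum (\<Sum>m\<in>M. s m)) (\<Union>m\<in>M. {x. P x \<and> n x = m})"
    by (rule sum_has_sum) (use assms in auto)
  moreover have "(\<Union>m\<in>M. {x. P x \<and> n x = m}) = {x. P x}" using assms(2) by auto
  ultimately show ?thesis by simp
qed

lemma has_sum_mult_nonneg:
  fixes a :: "'a \<Rightarrow> real" and b :: "'b \<Rightarrow> real"
  assumes "(a has_sum A) S" "(b has_sum B) T"
    and "\<And>x. x \<in> S \<Longrightarrow> a x \<ge> 0" "\<And>y. y \<in> T \<Longrightarrow> b y \<ge> 0"
  shows "((\<lambda>(x,y). a x * b y) has_sum (A * B)) (S \<times> T)"
proof -
  have rows: "\<And>x. x \<in> S \<Longrightarrow> ((\<lambda>y. (\<lambda>(x,y). a x * b y) (x, y)) has_sum (a x * B)) T"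
    using assms(2) by (simp add: has_sum_cmult_right)
  have cols: "((\<lambda>x. a x * B) has_sum (A * B)) S"
    using assms(1) by (rule has_sum_cmult_left)
  have "(\<lambda>(x,y). a x * b y) summable_on Sigma S (\<lambda>_. T)"
    by (rule summable_on_SigmaI[OF rows]) (use cols assms(3,4) in \<open>auto simp: has_sum_imp_summable\<close>)
  then show ?thesis using has_sum_SigmaI[OF rows cols] by simp
qed

lemma has_sum_prod_nth:
  fixes W :: "nat \<Rightarrow> 'a \<Rightarrow> real" and S :: "nat \<Rightarrow> 'a set"
  assumes "\<And>q x. q < n \<Longrightarrow> x \<in> S q \<Longrightarrow> W q x \<ge> 0"
    and "\<And>q. q < n \<Longrightarrow> (W q has_sum s q) (S q)"
  shows "((\<lambda>r. \<Prod>q<n. W q (r!q)) has_sum (\<Prod>q<n. s q)) {r. length r = n \<and> (\<forall>q<n. r!q \<in> S q)}"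
  using assms
proof (induction n arbitrary: W S s)
  case 0
  have "{r::'a list. length r = 0 \<and> (\<forall>q<0. r!q \<in> S q)} = {[]}" by auto
  then show ?case using has_sum_finite[of "{[]}" "\<lambda>r. 1::real"] by simp
next
  case (Suc n)
  define T where "T = {r. length r = n \<and> (\<forall>q<n. r!q \<in> S (Suc q))}"
  have tail: "((\<lambda>r. \<Prod>q<n. W (Suc q) (r!q)) has_sum (\<Prod>q<n. s (Suc q))) T"
    unfolding T_def by (rule Suc.IH) (use Suc.prems in auto)
  have cons: "{r. length r = Suc n \<and> (\<forall>q<Suc n. r!q \<in> S q)} = (\<lambda>(x,r). x#r) ` (S 0 \<times> T)"
  proof (rule set_eqI, rule iffI)
    fix r assume r: "r \<in> {r. length r = Suc n \<and> (\<forall>q<Suc n. r!q \<in> S q)}"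
    then obtain x r' where "r = x # r'" by (cases r) auto
    with r show "r \<in> (\<lambda>(x,r). x#r) ` (S 0 \<times> T)"
      unfolding T_def by (auto intro!: image_eqI[of _ _ "(x,r')"])
  qed (auto simp: T_def less_Suc_eq_0_disj)
  have inj: "inj_on (\<lambda>(x,r). x#r) (S 0 \<times> T)" by (auto simp: inj_on_def)
  have "((\<lambda>(x,y). W 0 x * (\<Prod>q<n. W (Suc q) (y!q))) has_sum (s 0 * (\<Prod>q<n. s (Suc q)))) (S 0 \<times> T)"
    by (rule has_sum_mult_nonneg[OF Suc.prems(2) tail])
      (use Suc.prems(1) in \<open>auto simp: T_def intro!: prod_nonneg\<close>)
  moreover have "((\<lambda>r. \<Prod>q<Suc n. W q (r!q)) \<circ> (\<lambda>(x,r). x#r)) = (\<lambda>(x,y). W 0 x * (\<Prod>q<n. W (Suc q) (y!q)))"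
    by (auto simp: prod.lessThan_Suc_shift fun_eq_iff simp del: prod.lessThan_Suc)
  ultimately have "((\<lambda>r. \<Prod>q<Suc n. W q (r!q)) has_sum (\<Prod>q<Suc n. s q)) ((\<lambda>(x,r). x#r) ` (S 0 \<times> T))"
    by (subst has_sum_reindex[OF inj]) (simp add: prod.lessThan_Suc_shift del: prod.lessThan_Suc)
  with cons show ?case by simp
qed

lemma prod_list_map_eq_prod_nth: "prod_list (map f xs) = (\<Prod>q<length xs. f (xs!q))"
  by (induction xs) (auto simp: prod.lessThan_Suc_shift simp del: prod.lessThan_Suc)

lemma summable_on_cmod_fun_upd:
  assumes "(\<lambda>j. cmod (z j)) summable_on UNIV"
  shows "(\<lambda>j. cmod ((z(i := x)) j)) summable_on UNIV"
proof -
  have "(\<lambda>j. cmod (z j)) summable_on UNIV - {i}"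
    by (rule summable_on_subset_banach[OF assms]) simp
  then have "(\<lambda>j. cmod ((z(i := x)) j)) summable_on UNIV - {i}"
    by (rule summable_on_cong[THEN iffD1, rotated]) simp
  then have "(\<lambda>j. cmod ((z(i := x)) j)) summable_on insert i (UNIV - {i})"
    by (simp only: summable_on_insert_iff)
  then show ?thesis by (simp add: insert_absorb)
qed

lemma summable_monomials:
  fixes z :: "'a \<Rightarrow> complex" and c :: "'a list \<Rightarrow> complex"
  assumes z: "(\<lambda>j. cmod (z j)) summable_on UNIV" and c: "\<And>js. cmod (c js) \<le> B"
  shows "(\<lambda>js. c js * prod_list (map z js)) summable_on {js. length js = k}"
proof -
  have "((\<lambda>r. \<Prod>q<k. cmod (z (r!q))) has_sum (\<Prod>q<k. infsum (\<lambda>j. cmod (z j)) UNIV))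
      {r. length r = k \<and> (\<forall>q<k. r!q \<in> UNIV)}"
    by (rule has_sum_prod_nth) (auto intro: has_sum_infsum[OF z])
  then have "(\<lambda>r. B * (\<Prod>q<k. cmod (z (r!q)))) summable_on {r. length r = k}"
    by (auto intro: summable_on_cmult_right dest: has_sum_imp_summable)
  then have "(\<lambda>js. norm (c js * prod_list (map z js))) summable_on {js. length js = k}"
    by (rule summable_on_comparison_test)
      (auto simp: norm_mult prod_list_map_eq_prod_nth prod_norm intro!: mult_right_mono c prod_nonneg)
  then show ?thesis by (simp add: summable_on_iff_abs_summable_on_complex)
qed

section \<open>Partial derivatives of a homogeneous polynomial\<close>

definition occurrences :: "'a \<Rightarrow> 'a list \<Rightarrow> nat" where
  "occurrences i js = card {q. q < length js \<and> js!q = i}"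

definition prod_others :: "('a \<Rightarrow> 'b::comm_monoid_mult) \<Rightarrow> 'a \<Rightarrow> 'a list \<Rightarrow> 'b" where
  "prod_others z i js = (\<Prod>q\<in>{q. q < length js \<and> js!q \<noteq> i}. z (js!q))"

definition dmonomial :: "('a \<Rightarrow> complex) \<Rightarrow> 'a \<Rightarrow> 'a list \<Rightarrow> complex" where
  "dmonomial z i js =
     of_nat (occurrences i js) * z i ^ (occurrences i js - 1) * prod_others z i js"

lemma occurrences_le_length: "occurrences i js \<le> length js"
proof -
  have "card {q. q < length js \<and> js!q = i} \<le> card {..<length js}"
    by (rule card_mono) auto
  then show ?thesis by (simp add: occurrences_def)
qed

lemma prod_list_map_fun_upd:
  fixes z :: "'a \<Rightarrow> 'b::comm_monoid_mult"
  shows "prod_list (map (z(i := x)) js) = x ^ occurrences i js * prod_others z i js"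
proof -
  have "prod_list (map (z(i := x)) js) =
     (\<Prod>q\<in>{..<length js} \<inter> {q. js!q = i}. (z(i:=x)) (js!q)) *
     (\<Prod>q\<in>{..<length js} - {q. js!q = i}. (z(i:=x)) (js!q))"
    unfolding prod_list_map_eq_prod_nth by (rule prod.Int_Diff) simp
  also have "(\<Prod>q\<in>{..<length js} \<inter> {q. js!q = i}. (z(i:=x)) (js!q)) =
      (\<Prod>q\<in>{q. q < length js \<and> js!q = i}. x)"
    by (rule prod.cong) auto
  also have "(\<Prod>q\<in>{..<length js} - {q. js!q = i}. (z(i:=x)) (js!q)) = prod_others z i js"
    unfolding prod_others_def by (rule prod.cong) auto
  also have "(\<Prod>q\<in>{q. q < length js \<and> js!q = i}. x) = x ^ occurrences i js"
    by (simp add: occurrences_def)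
  finally show ?thesis .
qed

lemma dmonomial_eq_sum_positions:
  "dmonomial z i js =
     (\<Sum>p<length js. if js!p = i then (\<Prod>q\<in>{..<length js} - {p}. z (js!q)) else 0)"
proof -
  have others: "(\<Prod>q\<in>{..<length js} - {p}. z (js!q)) = z i ^ (occurrences i js - 1) * prod_others z i js"
    if p: "p < length js" "js!p = i" for p
  proof -
    have "(\<Prod>q\<in>{..<length js} - {p}. z (js!q)) =
       (\<Prod>q\<in>({..<length js} - {p}) \<inter> {q. js!q = i}. z (js!q)) *
       (\<Prod>q\<in>({..<length js} - {p}) - {q. js!q = i}. z (js!q))"
      by (rule prod.Int_Diff) simp
    also have "(\<Prod>q\<in>({..<length js} - {p}) \<inter> {q. js!q = i}. z (js!q)) =
        (\<Prod>q\<in>{q. q < length js \<and> js!q = i} - {p}. z i)"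
      by (rule prod.cong) auto
    also have "\<dots> = z i ^ (occurrences i js - 1)"
      using p by (simp add: occurrences_def)
    also have "(\<Prod>q\<in>({..<length js} - {p}) - {q. js!q = i}. z (js!q)) = prod_others z i js"
      unfolding prod_others_def using p by (intro prod.cong) auto
    finally show ?thesis .
  qed
  have "(\<Sum>p<length js. if js!p = i then (\<Prod>q\<in>{..<length js} - {p}. z (js!q)) else 0)
      = (\<Sum>p\<in>{q. q < length js \<and> js!q = i}. z i ^ (occurrences i js - 1) * prod_others z i js)"
    by (subst sum.inter_filter[symmetric]) (auto intro!: sum.cong simp: others)
  then show ?thesis by (simp add: dmonomial_def occurrences_def)
qed

lemma summable_prod_others:
  fixes z :: "'a \<Rightarrow> complex" and c :: "'a list \<Rightarrow> complex"
  assumes z: "(\<lambda>j. cmod (z j)) summable_on UNIV" and c: "\<And>js. cmod (c js) \<le> B"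
  shows "(\<lambda>js. c js * prod_others z i js) summable_on {js. length js = k \<and> occurrences i js = m}"
proof -
  have "(\<lambda>js. c js * prod_list (map (z(i := 1)) js)) summable_on {js. length js = k}"
    by (rule summable_monomials[OF summable_on_cmod_fun_upd[OF z] c])
  then have "(\<lambda>js. c js * prod_others z i js) summable_on {js. length js = k}"
    by (simp add: prod_list_map_fun_upd)
  then show ?thesis by (rule summable_on_subset_banach) auto
qed

lemma poly_eval_fun_upd:
  fixes z :: "'d::finite idx \<Rightarrow> complex"
  assumes z: "(\<lambda>j. cmod (z j)) summable_on UNIV" and c: "\<And>js. cmod (c js) \<le> B"
  shows "poly_eval k c (z(i := x)) =
    (\<Sum>m\<le>k. x ^ m * (\<Sum>\<^sub>\<infinity>js\<in>{js. length js = k \<and> occurrences i js = m}. c js * prod_others z i js))"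
proof -
  have "((\<lambda>js. c js * prod_list (map (z(i := x)) js)) has_sum
      (\<Sum>m\<le>k. x ^ m * (\<Sum>\<^sub>\<infinity>js\<in>{js. length js = k \<and> occurrences i js = m}. c js * prod_others z i js)))
      {js. length js = k}"
  proof (rule has_sum_finite_partition[where n = "occurrences i"])
    fix m
    have "((\<lambda>js. x ^ m * (c js * prod_others z i js)) has_sum
        (x ^ m * (\<Sum>\<^sub>\<infinity>js\<in>{js. length js = k \<and> occurrences i js = m}. c js * prod_others z i js)))
        {js. length js = k \<and> occurrences i js = m}"
      by (intro has_sum_cmult_right has_sum_infsum summable_prod_others[OF z c])
    then show "((\<lambda>js. c js * prod_list (map (z(i := x)) js)) has_sum
        (x ^ m * (\<Sum>\<^sub>\<infinity>js\<in>{js. length js = k \<and> occurrences i js = m}. c js * prod_others z i js)))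
        {js. length js = k \<and> occurrences i js = m}"
      by (rule has_sum_cong[THEN iffD1, rotated]) (auto simp: prod_list_map_fun_upd)
  qed (use occurrences_le_length in auto)
  then show ?thesis unfolding poly_eval_def by (rule infsumI)
qed

lemma has_sum_dmonomial:
  fixes z :: "'d::finite idx \<Rightarrow> complex"
  assumes z: "(\<lambda>j. cmod (z j)) summable_on UNIV" and c: "\<And>js. cmod (c js) \<le> B"
  shows "((\<lambda>js. c js * dmonomial z i js) has_sum dpoly k c z i) {js. length js = k}"
proof -
  define a where
    "a m = (\<Sum>\<^sub>\<infinity>js\<in>{js. length js = k \<and> occurrences i js = m}. c js * prod_others z i js)" for m
  have "((\<lambda>x. \<Sum>m\<le>k. x ^ m * a m) has_field_derivative (\<Sum>m\<le>k. of_nat m * z i ^ (m - 1) * a m))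
      (at (z i))"
    by (auto intro!: derivative_eq_intros)
  then have dpoly: "dpoly k c z i = (\<Sum>m\<le>k. of_nat m * z i ^ (m - 1) * a m)"
    unfolding dpoly_def poly_eval_fun_upd[OF z c] a_def by (rule DERIV_imp_deriv)
  have "((\<lambda>js. c js * dmonomial z i js) has_sum (\<Sum>m\<le>k. of_nat m * z i ^ (m - 1) * a m))
      {js. length js = k}"
  proof (rule has_sum_finite_partition[where n = "occurrences i"])
    fix m
    have "((\<lambda>js. of_nat m * z i ^ (m - 1) * (c js * prod_others z i js)) has_sum
        (of_nat m * z i ^ (m - 1) * a m)) {js. length js = k \<and> occurrences i js = m}"
      unfolding a_def by (intro has_sum_cmult_right has_sum_infsum summable_prod_others[OF z c])
    then show "((\<lambda>js. c js * dmonomial z i js) has_sum (of_nat m * z i ^ (m - 1) * a m))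
        {js. length js = k \<and> occurrences i js = m}"
      by (rule has_sum_cong[THEN iffD1, rotated]) (auto simp: dmonomial_def)
  qed (use occurrences_le_length in auto)
  then show ?thesis by (simp add: dpoly)
qed

section \<open>Conjugation and resonant monomials\<close>

lemma bar_bar [simp]: "bar (bar j) = j"
  by (simp add: bar_def)

lemma bar_neq [simp]: "bar j \<noteq> j" "j \<noteq> bar j"
  by (auto simp: bar_def prod_eq_iff)

lemma jnorm_bar [simp]: "jnorm (bar j) = jnorm j"
  by (simp add: bar_def jnorm_def)

lemma bar_comp_bar [simp]: "bar \<circ> bar = id"
  by (simp add: fun_eq_iff)

lemma bar_eq_iff: "bar x = y \<longleftrightarrow> x = bar y"
  by (auto simp: bar_def)

lemma count_image_mset_bar: "count (image_mset bar M) x = count M (bar x)"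
  by (induction M) (auto simp: bar_eq_iff)

lemma occurrences_eq_count: "occurrences i js = count (mset js) i"
proof -
  have "occurrences i js = length (filter ((=) i) js)"
    unfolding occurrences_def length_filter_conv_card by (metis (mono_tags, lifting))
  then show ?thesis by (simp add: count_mset count_list_eq_length_filter)
qed

lemma occurrences_map_bar: "occurrences i (map bar js) = occurrences (bar i) js"
  unfolding occurrences_def by (rule arg_cong[where f = card]) (auto simp: bar_eq_iff)

lemma resonant_imp_resonant_map_bar: "resonant js \<Longrightarrow> resonant (map bar js)"
proof -
  assume "resonant js"
  then obtain is' where "even (length js)" "mset js = mset (is' @ map bar is')"
    by (auto simp: resonant_def)
  moreover have "image_mset bar (mset is' + image_mset bar (mset is')) =
      mset (map bar is' @ map bar (map bar is'))"
    by (simp add: add.commute image_mset.compositionality)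
  ultimately show ?thesis
    unfolding resonant_def by (intro conjI exI[of _ "map bar is'"]) auto
qed

lemma resonant_map_bar [simp]: "resonant (map bar js) \<longleftrightarrow> resonant js"
  using resonant_imp_resonant_map_bar[of js] resonant_imp_resonant_map_bar[of "map bar js"]
  by auto

lemma bij_betw_map_bar: "bij_betw (map bar) {js. length js = k} {js. length js = k}"
  by (rule bij_betwI[where g = "map bar"]) auto

lemma resonant_occurrences_bar: "resonant js \<Longrightarrow> occurrences (bar j) js = occurrences j js"
proof -
  assume "resonant js"
  then obtain is' where "mset js = mset is' + image_mset bar (mset is')"
    by (auto simp: resonant_def)
  then show ?thesis by (simp add: occurrences_eq_count count_image_mset_bar)
qed

definition prod_off_pair :: "('d idx \<Rightarrow> complex) \<Rightarrow> 'd idx \<Rightarrow> 'd idx list \<Rightarrow> complex" where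
  "prod_off_pair z j js = (\<Prod>q\<in>{q. q < length js \<and> js!q \<noteq> j \<and> js!q \<noteq> bar j}. z (js!q))"

lemma prod_others_bar: "prod_others z (bar j) js = z j ^ occurrences j js * prod_off_pair z j js"
proof -
  have "prod_others z (bar j) js =
      (\<Prod>q\<in>{q. q < length js \<and> js!q \<noteq> bar j} \<inter> {q. js!q = j}. z (js!q)) *
      (\<Prod>q\<in>{q. q < length js \<and> js!q \<noteq> bar j} - {q. js!q = j}. z (js!q))"
    unfolding prod_others_def by (rule prod.Int_Diff) simp
  also have "(\<Prod>q\<in>{q. q < length js \<and> js!q \<noteq> bar j} \<inter> {q. js!q = j}. z (js!q)) =
      (\<Prod>q\<in>{q. q < length js \<and> js!q = j}. z j)"
    by (rule prod.cong) auto
  also have "\<dots> = z j ^ occurrences j js" by (simp add: occurrences_def)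
  also have "(\<Prod>q\<in>{q. q < length js \<and> js!q \<noteq> bar j} - {q. js!q = j}. z (js!q)) =
      prod_off_pair z j js"
    unfolding prod_off_pair_def by (rule prod.cong) auto
  finally show ?thesis .
qed

lemma prod_off_pair_map_bar:
  assumes "is_real_seq z"
  shows "prod_off_pair z j (map bar js) = cnj (prod_off_pair z j js)"
proof -
  have "z (bar x) = cnj (z x)" for x using assms unfolding is_real_seq_def by blast
  then show ?thesis
    unfolding prod_off_pair_def cnj_prod by simp (rule prod.cong, auto simp: bar_eq_iff)
qed

lemma dmonomial_bar_resonant:
  fixes z :: "'d::finite idx \<Rightarrow> complex" and j :: "'d idx"
  assumes real: "is_real_seq z" and res: "resonant js"
  defines "n \<equiv> occurrences j js"
  shows "dmonomial z (bar j) js = z j * (of_nat n * (cnj (z j) * z j) ^ (n - 1) * prod_off_pair z j js)"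
proof (cases n)
  case 0
  then show ?thesis using resonant_occurrences_bar[OF res] by (simp add: dmonomial_def n_def)
next
  case (Suc m)
  have "z (bar j) = cnj (z j)" using real unfolding is_real_seq_def by blast
  then have "dmonomial z (bar j) js = of_nat n * cnj (z j) ^ m * (z j * z j ^ m * prod_off_pair z j js)"
    using Suc resonant_occurrences_bar[OF res]
    by (simp add: dmonomial_def prod_others_bar n_def)
  also have "\<dots> = z j * (of_nat n * (cnj (z j) * z j) ^ m * prod_off_pair z j js)"
    by (simp add: power_mult_distrib)
  finally show ?thesis by (simp add: Suc)
qed

definition resonant_part :: "('d::finite idx list \<Rightarrow> complex) \<Rightarrow> 'd idx list \<Rightarrow> complex" where
  "resonant_part c js = (if resonant js then c js else 0)"

definition nonresonant_part :: "('d::finite idx list \<Rightarrow> complex) \<Rightarrow> 'd idx list \<Rightarrow> complex" where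
  "nonresonant_part c js = (if resonant js then 0 else c js)"

lemma infsum_resonant_part_dmonomial_bar:
  fixes z :: "('d::finite) idx \<Rightarrow> complex" and c :: "'d idx list \<Rightarrow> complex"
  assumes real: "is_real_seq z" and cbar: "\<And>js. c (map bar js) = cnj (c js)"
  obtains r :: real where
    "(\<Sum>\<^sub>\<infinity>js\<in>{js. length js = k}. resonant_part c js * dmonomial z (bar j) js) = z j * r"
proof -
  define L where "L = {js::'d idx list. length js = k}"
  define f where "f js = resonant_part c js *
      (of_nat (occurrences j js) * (cnj (z j) * z j) ^ (occurrences j js - 1) * prod_off_pair z j js)"
    for js
  have "(\<Sum>\<^sub>\<infinity>js\<in>L. resonant_part c js * dmonomial z (bar j) js) = (\<Sum>\<^sub>\<infinity>js\<in>L. z j * f js)"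
    by (rule infsum_cong) (auto simp: f_def resonant_part_def dmonomial_bar_resonant[OF real])
  also have "\<dots> = z j * infsum f L" by (rule infsum_cmult_right')
  finally have sum: "(\<Sum>\<^sub>\<infinity>js\<in>L. resonant_part c js * dmonomial z (bar j) js) = z j * infsum f L" .
  have f_map_bar: "f (map bar js) = cnj (f js)" for js
    using resonant_occurrences_bar[of js j]
    by (simp add: f_def resonant_part_def cbar occurrences_map_bar prod_off_pair_map_bar[OF real]
        mult.commute)
  have "infsum f L = infsum (\<lambda>js. f (map bar js)) L"
    unfolding L_def by (rule infsum_reindex_bij_betw[OF bij_betw_map_bar, symmetric])
  also have "\<dots> = cnj (infsum f L)" by (simp add: f_map_bar)
  finally have "Im (infsum f L) = 0" by (metis cnj.simps(2) neg_equal_zero)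
  then have "infsum f L = of_real (Re (infsum f L))" by (simp add: complex_eq_iff)
  with sum show ?thesis using that unfolding L_def by metis
qed

definition real_vec :: "int ^ ('d::finite) \<Rightarrow> real ^ 'd" where
  "real_vec a = (\<chi> i. real_of_int (a $ i))"

lemma anorm_eq_norm_real_vec: "anorm a = norm (real_vec a)"
  by (simp add: anorm_def real_vec_def norm_vec_def L2_set_def)

lemma real_vec_uminus: "real_vec (- a) = - real_vec a"
  by (simp add: real_vec_def vec_eq_iff)

lemma real_vec_sum: "real_vec (sum f A) = (\<Sum>x\<in>A. real_vec (f x))"
  by (induction A rule: infinite_finite_induct) (auto simp: vec_eq_iff real_vec_def)

definition signed_mode :: "'d idx \<Rightarrow> int ^ 'd" where
  "signed_mode j = (if snd j then fst j else - fst j)"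

lemma momentum_eq_sum_signed_mode: "momentum js = (\<Sum>q<length js. signed_mode (js!q))"
proof -
  have "momentum js = sum_list (map signed_mode js)"
    unfolding momentum_def by (induction js) (auto simp: signed_mode_def)
  then show ?thesis by (simp add: sum_list_sum_nth atLeast0LessThan)
qed

lemma jnorm_eq_norm_signed_mode: "jnorm j = norm (real_vec (signed_mode j))"
  by (simp add: jnorm_def signed_mode_def anorm_eq_norm_real_vec real_vec_uminus)

lemma jnorm_le_sum_others:
  assumes "momentum js = 0" "p < length js"
  shows "jnorm (js!p) \<le> (\<Sum>q\<in>{..<length js} - {p}. jnorm (js!q))"
proof -
  have "0 = signed_mode (js!p) + (\<Sum>q\<in>{..<length js} - {p}. signed_mode (js!q))"
    using assms by (simp add: momentum_eq_sum_signed_mode sum.remove)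
  then have "signed_mode (js!p) = - (\<Sum>q\<in>{..<length js} - {p}. signed_mode (js!q))"
    by (simp add: eq_neg_iff_add_eq_0)
  then have "jnorm (js!p) = norm (\<Sum>q\<in>{..<length js} - {p}. real_vec (signed_mode (js!q)))"
    by (simp add: jnorm_eq_norm_signed_mode real_vec_uminus real_vec_sum)
  also have "\<dots> \<le> (\<Sum>q\<in>{..<length js} - {p}. norm (real_vec (signed_mode (js!q))))"
    by (rule norm_sum)
  finally show ?thesis by (simp add: jnorm_eq_norm_signed_mode)
qed

lemma momentum_zero_eqI:
  assumes "momentum js = 0" "momentum js' = 0" "length js = length js'" "p < length js"
    and "\<And>q. q < length js \<Longrightarrow> q \<noteq> p \<Longrightarrow> js!q = js'!q" "snd (js!p) = snd (js'!p)"
  shows "js = js'"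
proof -
  have "signed_mode (js!p) + (\<Sum>q\<in>{..<length js} - {p}. signed_mode (js!q)) = 0"
    using assms(1,4) by (simp add: momentum_eq_sum_signed_mode sum.remove)
  moreover have "signed_mode (js'!p) + (\<Sum>q\<in>{..<length js} - {p}. signed_mode (js'!q)) = 0"
    using assms(2,3,4) by (simp add: momentum_eq_sum_signed_mode sum.remove)
  moreover have "(\<Sum>q\<in>{..<length js} - {p}. signed_mode (js!q)) =
      (\<Sum>q\<in>{..<length js} - {p}. signed_mode (js'!q))"
    using assms(5) by (intro sum.cong) auto
  ultimately have "signed_mode (js!p) = signed_mode (js'!p)" by (metis add_right_cancel)
  with assms(6) have "js!p = js'!p"
    by (cases "js!p"; cases "js'!p") (auto simp: signed_mode_def split: if_splits)
  then show ?thesis using assms(3,5) by (metis nth_equalityI)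
qed

lemma has_sum_prod_except:
  fixes u :: "'a \<Rightarrow> real"
  assumes u0: "\<And>j. u j \<ge> 0" and us: "u summable_on UNIV" and E: "finite E"
    and pos: "p < k" "q1 < k" "q2 < k" "p \<noteq> q1" "p \<noteq> q2" "q1 \<noteq> q2"
  shows "((\<lambda>r. \<Prod>q\<in>{..<k} - {p}. u (r!q)) has_sum
      (card E * (infsum u S)\<^sup>2 * (infsum u UNIV) ^ (k - 3)))
      {r. length r = k \<and> r!p \<in> E \<and> r!q1 \<in> S \<and> r!q2 \<in> S}"
proof -
  define S' where "S' q = (if q = p then E else if q = q1 \<or> q = q2 then S else UNIV)" for q
  define w where "w q x = (if q = p then 1 else u x)" for q x
  define s where
    "s q = (if q = p then real (card E) else if q = q1 \<or> q = q2 then infsum u S else infsum u UNIV)"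
    for q
  have "((\<lambda>r. \<Prod>q<k. w q (r!q)) has_sum (\<Prod>q<k. s q)) {r. length r = k \<and> (\<forall>q<k. r!q \<in> S' q)}"
  proof (rule has_sum_prod_nth)
    fix q
    show "(w q has_sum s q) (S' q)"
    proof (cases "q = p")
      case True
      then show ?thesis using E by (simp add: w_def s_def S'_def has_sum_finiteI)
    next
      case False
      then have w: "w q = u" by (simp add: w_def fun_eq_iff)
      have "u summable_on S" by (rule summable_on_subset_banach[OF us]) simp
      then show ?thesis
        using False us unfolding w s_def S'_def by (simp add: has_sum_infsum)
    qed
  qed (simp add: w_def u0)
  moreover have "(\<forall>q<k. r!q \<in> S' q) \<longleftrightarrow> r!p \<in> E \<and> r!q1 \<in> S \<and> r!q2 \<in> S" for r
  proof
    assume "\<forall>q<k. r!q \<in> S' q"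
    then have "r!p \<in> S' p" "r!q1 \<in> S' q1" "r!q2 \<in> S' q2" using pos by auto
    then show "r!p \<in> E \<and> r!q1 \<in> S \<and> r!q2 \<in> S" using pos by (simp add: S'_def)
  qed (auto simp: S'_def)
  moreover have "(\<Prod>q<k. w q (r!q)) = (\<Prod>q\<in>{..<k} - {p}. u (r!q))" for r
    using pos by (simp add: prod.remove w_def)
  moreover have "(\<Prod>q<k. s q) = card E * (infsum u S)\<^sup>2 * (infsum u UNIV) ^ (k - 3)"
  proof -
    have sub: "{p, q1, q2} \<subseteq> {..<k}" using pos by auto
    have "(\<Prod>q<k. s q) = (\<Prod>q\<in>{p, q1, q2}. s q) * (\<Prod>q\<in>{..<k} - {p, q1, q2}. s q)"
      using prod.subset_diff[OF sub] by (simp add: mult.commute)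
    also have "(\<Prod>q\<in>{p, q1, q2}. s q) = card E * (infsum u S)\<^sup>2"
      using pos by (simp add: s_def power2_eq_square)
    also have "(\<Prod>q\<in>{..<k} - {p, q1, q2}. s q) = (\<Prod>q\<in>{..<k} - {p, q1, q2}. infsum u UNIV)"
      by (rule prod.cong) (auto simp: s_def)
    also have "\<dots> = infsum u UNIV ^ (k - 3)"
    proof -
      have "card ({..<k} - {p, q1, q2}) = k - 3" using sub pos by (simp add: card_Diff_subset)
      then show ?thesis by simp
    qed
    finally show ?thesis .
  qed
  ultimately show ?thesis by simp
qed
definition tail_term :: "('d::finite idx \<Rightarrow> real) \<Rightarrow> nat \<Rightarrow> nat \<Rightarrow> nat \<Rightarrow> nat \<Rightarrow> 'd idx list \<Rightarrow> real" where
  "tail_term u N p q1 q2 js =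
     (if momentum js = 0 \<and> jnorm (js!q1) > real N \<and> jnorm (js!q2) > real N
      then \<Prod>q\<in>{..<length js} - {p}. u (js!q) else 0)"

lemma inj_on_forget_entry:
  "inj_on (\<lambda>js. js[p := (0, snd (js!p))]) {js. length js = k \<and> p < k \<and> momentum js = 0}"
proof (rule inj_onI)
  fix x y assume x: "x \<in> {js. length js = k \<and> p < k \<and> momentum js = 0}"
    and y: "y \<in> {js. length js = k \<and> p < k \<and> momentum js = 0}"
    and eq: "x[p := (0, snd (x!p))] = y[p := (0, snd (y!p))]"
  show "x = y"
  proof (rule momentum_zero_eqI[where p = p])
    show "momentum x = 0" "momentum y = 0" "length x = length y" "p < length x"
      using x y by auto
    show "snd (x!p) = snd (y!p)"
      using arg_cong[OF eq, of "\<lambda>r. snd (r!p)"] x y by simp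
    fix q assume "q < length x" "q \<noteq> p"
    then show "x!q = y!q" using arg_cong[OF eq, of "\<lambda>r. r!q"] by simp
  qed
qed

text \<open>Zero momentum determines \<open>js!p\<close> up to its sign from the other entries, so forgetting
  it maps the support injectively into a product set with two choices at position \<open>p\<close>.\<close>
lemma tail_term_summable_bound:
  fixes u :: "'d::finite idx \<Rightarrow> real" and N :: nat
  assumes u0: "\<And>j. u j \<ge> 0" and us: "u summable_on UNIV"
    and pos: "p < k" "q1 < k" "q2 < k" "p \<noteq> q1" "p \<noteq> q2" "q1 \<noteq> q2"
  defines "R \<equiv> infsum u {j. jnorm j > real N}"
  shows "tail_term u N p q1 q2 summable_on {js. length js = k}"
    and "infsum (tail_term u N p q1 q2) {js. length js = k} \<le> 2 * R\<^sup>2 * (infsum u UNIV) ^ (k - 3)"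
proof -
  define Lg where "Lg = {j::'d idx. jnorm j > real N}"
  define A where "A = {js. length js = k \<and> momentum js = 0 \<and> js!q1 \<in> Lg \<and> js!q2 \<in> Lg}"
  define E :: "'d idx set" where "E = {(0, True), (0, False)}"
  define T where "T = {r. length r = k \<and> r!p \<in> E \<and> r!q1 \<in> Lg \<and> r!q2 \<in> Lg}"
  define f where "f js = (\<Prod>q\<in>{..<k} - {p}. u (js!q))" for js :: "'d idx list"
  define \<phi> where "\<phi> js = js[p := (0, snd (js!p))]" for js :: "'d idx list"
  have "card E = 2" by (simp add: E_def)
  then have fT: "(f has_sum (2 * R\<^sup>2 * (infsum u UNIV) ^ (k - 3))) T"
    unfolding f_def T_def R_def Lg_def using has_sum_prod_except[OF u0 us _ pos, where E = E and S = Lg]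
    by (simp add: E_def Lg_def)
  have "A \<subseteq> {js. length js = k \<and> p < k \<and> momentum js = 0}" using pos by (auto simp: A_def)
  then have inj: "inj_on \<phi> A"
    unfolding \<phi>_def[abs_def] by (rule inj_on_subset[OF inj_on_forget_entry])
  have sub: "\<phi> ` A \<subseteq> T"
    using pos by (auto simp: A_def T_def \<phi>_def E_def nth_list_update)
  have f_\<phi>: "f (\<phi> js) = f js" for js
    unfolding f_def \<phi>_def by (rule prod.cong) auto
  have fs: "f summable_on \<phi> ` A"
    by (rule summable_on_subset_banach[OF has_sum_imp_summable[OF fT] sub])
  have fA: "f summable_on A"
    using summable_on_reindex[OF inj, of f] fs by (simp add: comp_def f_\<phi>)
  have "infsum f A = infsum f (\<phi> ` A)"
    using infsum_reindex[OF inj, of f] by (simp add: comp_def f_\<phi>)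
  also have "\<dots> \<le> infsum f T"
    by (rule infsum_mono_neutral[OF fs has_sum_imp_summable[OF fT]])
      (use sub in \<open>auto simp: f_def u0 intro!: prod_nonneg\<close>)
  also have "\<dots> = 2 * R\<^sup>2 * (infsum u UNIV) ^ (k - 3)" using fT by (rule infsumI)
  finally have fA_le: "infsum f A \<le> 2 * R\<^sup>2 * (infsum u UNIV) ^ (k - 3)" .
  have tail: "js \<in> {js. length js = k} \<Longrightarrow> tail_term u N p q1 q2 js = (if js \<in> A then f js else 0)" for js
    by (simp add: tail_term_def A_def Lg_def f_def)
  have "tail_term u N p q1 q2 summable_on {js. length js = k} \<longleftrightarrow> f summable_on A"
    by (rule summable_on_cong_neutral) (auto simp: tail A_def)
  then show "tail_term u N p q1 q2 summable_on {js. length js = k}" using fA by simp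
  have "infsum (tail_term u N p q1 q2) {js. length js = k} = infsum f A"
    by (rule infsum_cong_neutral) (auto simp: tail A_def)
  then show "infsum (tail_term u N p q1 q2) {js. length js = k} \<le> 2 * R\<^sup>2 * (infsum u UNIV) ^ (k - 3)"
    using fA_le by simp
qed

lemma card_large_entries_ge_3:
  assumes "length js \<ge> 3" "mu js > real N"
  shows "3 \<le> card {q. q < length js \<and> jnorm (js!q) > real N}"
proof -
  define ys where "ys = sort (map jnorm js)"
  define xs where "xs = rev ys"
  define n where "n = length js"
  have len: "length ys = n" by (simp add: ys_def n_def)
  have sorted: "sorted ys" by (simp add: ys_def)
  have n3: "n \<ge> 3" using assms(1) by (simp add: n_def)
  have xs_nth: "xs!i = ys!(n - 1 - i)" if "i < n" for i
    using that len by (simp add: xs_def rev_nth)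
  have "xs!2 \<le> xs!1" "xs!2 \<le> xs!0"
    unfolding xs_nth[of 0] xs_nth[of 1] xs_nth[of 2] using n3
    by (simp_all add: xs_nth len sorted_nth_mono[OF sorted])
  moreover have "xs!2 > real N" using assms(2) by (simp add: mu_def xs_def ys_def)
  ultimately have "{0, 1, 2} \<subseteq> {i. i < length xs \<and> xs!i > real N}"
    using assms(1) len by (auto simp: xs_def n_def)
  then have "3 \<le> card {i. i < length xs \<and> xs!i > real N}"
    using card_mono[of "{i. i < length xs \<and> xs!i > real N}" "{0, 1, 2}"] by simp
  also have "card {i. i < length xs \<and> xs!i > real N} = size (filter_mset (\<lambda>x. x > real N) (mset xs))"
    by (metis length_filter_conv_card mset_filter size_mset)
  also have "mset xs = mset (map jnorm js)" by (simp add: xs_def ys_def)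
  also have "size (filter_mset (\<lambda>x. x > real N) (mset (map jnorm js))) =
      length (filter (\<lambda>x. x > real N) (map jnorm js))"
    by (metis mset_filter size_mset)
  also have "\<dots> = card {q. q < length js \<and> jnorm (js!q) > real N}"
    unfolding length_filter_conv_card by (rule arg_cong[where f = card]) auto
  finally show ?thesis .
qed

lemma two_elements_avoiding:
  fixes n p :: nat
  assumes "3 \<le> card {q. q < n \<and> P q}"
  obtains q1 q2 where "q1 < q2" "q2 < n" "q1 \<noteq> p" "q2 \<noteq> p" "P q1" "P q2"
proof -
  define M where "M = {q. q < n \<and> P q} - {p}"
  have "card {q. q < n \<and> P q} - card {p} \<le> card M"
    unfolding M_def by (rule diff_card_le_card_Diff) simp
  with assms have "Suc (Suc 0) \<le> card M" by simp
  then obtain a b where "a \<in> M" "b \<in> M" "a \<noteq> b"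
    by (auto simp: card_le_Suc_iff)
  then show ?thesis
    using that[of "min a b" "max a b"] by (auto simp: M_def min_def max_def)
qed

section \<open>The nonresonant part of the vector field\<close>

lemma hom_poly_bounded: "hom_poly k c \<Longrightarrow> \<exists>B. \<forall>js. cmod (c js) \<le> B"
  by (auto simp: hom_poly_def bdd_above_def)

lemma cmod_le_pnorm:
  fixes c :: "'d::finite idx list \<Rightarrow> complex"
  assumes "hom_poly k c" "length js = k" "momentum js = 0"
  shows "cmod (c js) \<le> pnorm k c"
proof -
  have "bdd_above (range (\<lambda>js. cmod (c js)))" using assms(1) by (simp add: hom_poly_def)
  then have "bdd_above ((\<lambda>js. cmod (c js)) ` {js. length js = k \<and> momentum js = 0})"
    by (rule bdd_above_mono) auto
  with assms(2,3) show ?thesis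
    unfolding pnorm_def by (intro cSUP_upper) auto
qed

lemma pnorm_nonneg:
  fixes c :: "'d::finite idx list \<Rightarrow> complex"
  assumes "hom_poly k c"
  shows "0 \<le> pnorm k c"
proof -
  have "momentum (replicate k ((0::int^'d), True)) = 0"
    by (simp add: momentum_def sum_list_replicate)
  then have "cmod (c (replicate k (0, True))) \<le> pnorm k c"
    by (intro cmod_le_pnorm[OF assms]) simp_all
  then show ?thesis by (meson norm_ge_zero order_trans)
qed
lemma jnorm_nonneg: "jnorm j \<ge> 0"
  by (simp add: jnorm_def anorm_def sum_nonneg)

lemma in_L_imp_summable_cmod:
  assumes "in_L \<rho> z" "\<rho> \<ge> 0"
  shows "(\<lambda>j. cmod (z j)) summable_on UNIV"
proof (rule summable_on_comparison_test)
  show "(\<lambda>j. exp (\<rho> * jnorm j) * cmod (z j)) summable_on UNIV"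
    using assms(1) by (simp add: in_L_def)
next
  fix j
  show "cmod (z j) \<le> exp (\<rho> * jnorm j) * cmod (z j)"
    using assms(2) jnorm_nonneg[of j] by (simp add: mult_le_cancel_right1)
qed simp

lemma sum_weighted_dmonomial_le:
  fixes z :: "'d::finite idx \<Rightarrow> complex"
  assumes mom: "momentum js = 0" and rho: "\<rho> \<ge> 0" and F: "finite F"
  shows "(\<Sum>j\<in>F. exp (\<rho> * jnorm j) * cmod (dmonomial z (bar j) js)) \<le>
    (\<Sum>p<length js. \<Prod>q\<in>{..<length js} - {p}. exp (\<rho> * jnorm (js!q)) * cmod (z (js!q)))"
proof -
  define n where "n = length js"
  define e where "e j = exp (\<rho> * jnorm j)" for j :: "'d idx"
  define a where "a p = (\<Prod>q\<in>{..<n} - {p}. cmod (z (js!q)))" for p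
  have a0: "a p \<ge> 0" for p by (simp add: a_def prod_nonneg)
  have "cmod (dmonomial z (bar j) js) \<le> (\<Sum>p<n. cmod (if js!p = bar j then (\<Prod>q\<in>{..<n} - {p}. z (js!q)) else 0))" for j
    unfolding dmonomial_eq_sum_positions n_def by (rule norm_sum)
  then have "cmod (dmonomial z (bar j) js) \<le> (\<Sum>p<n. if js!p = bar j then a p else 0)" for j
    by (simp add: a_def prod_norm if_distrib cong: if_cong)
  then have "(\<Sum>j\<in>F. e j * cmod (dmonomial z (bar j) js)) \<le>
      (\<Sum>j\<in>F. e j * (\<Sum>p<n. if js!p = bar j then a p else 0))"
    by (intro sum_mono mult_left_mono) (auto simp: e_def)
  also have "\<dots> = (\<Sum>j\<in>F. \<Sum>p<n. if j = bar (js!p) then e (js!p) * a p else 0)"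
    by (auto simp: sum_distrib_left bar_eq_iff e_def intro!: sum.cong)
  also have "\<dots> = (\<Sum>p<n. \<Sum>j\<in>F. if j = bar (js!p) then e (js!p) * a p else 0)"
    by (rule sum.swap)
  also have "\<dots> \<le> (\<Sum>p<n. e (js!p) * a p)"
    by (intro sum_mono) (auto simp: F e_def a0)
  also have "\<dots> \<le> (\<Sum>p<n. \<Prod>q\<in>{..<n} - {p}. e (js!q) * cmod (z (js!q)))"
  proof (rule sum_mono)
    fix p assume "p \<in> {..<n}"
    then have "e (js!p) \<le> exp (\<rho> * (\<Sum>q\<in>{..<n} - {p}. jnorm (js!q)))"
      using jnorm_le_sum_others[OF mom, of p] rho by (simp add: e_def n_def mult_left_mono)
    then have "e (js!p) * a p \<le> exp (\<rho> * (\<Sum>q\<in>{..<n} - {p}. jnorm (js!q))) * a p"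
      using a0 by (rule mult_right_mono)
    also have "\<dots> = (\<Prod>q\<in>{..<n} - {p}. e (js!q) * cmod (z (js!q)))"
      by (simp add: a_def e_def exp_sum sum_distrib_left prod.distrib)
    finally show "e (js!p) * a p \<le> (\<Prod>q\<in>{..<n} - {p}. e (js!q) * cmod (z (js!q)))" .
  qed
  finally show ?thesis by (simp add: e_def n_def)
qed

definition position_pairs :: "nat \<Rightarrow> nat \<Rightarrow> (nat \<times> nat) set" where
  "position_pairs k p = {(q1, q2). q1 < q2 \<and> q2 < k \<and> q1 \<noteq> p \<and> q2 \<noteq> p}"

lemma finite_position_pairs: "finite (position_pairs k p)"
  by (rule finite_subset[of _ "{..<k} \<times> {..<k}"]) (auto simp: position_pairs_def)

lemma card_position_pairs_le: "card (position_pairs k p) \<le> k * k"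
proof -
  have "card (position_pairs k p) \<le> card ({..<k} \<times> {..<k})"
    by (rule card_mono) (auto simp: position_pairs_def)
  then show ?thesis by (simp add: card_cartesian_product)
qed

lemma tail_term_nonneg: "(\<And>j. u j \<ge> 0) \<Longrightarrow> tail_term u N p q1 q2 js \<ge> 0"
  by (simp add: tail_term_def prod_nonneg)

lemma prod_le_sum_tail_terms:
  fixes u :: "'d::finite idx \<Rightarrow> real"
  assumes u0: "\<And>j. u j \<ge> 0" and mom: "momentum js = 0" and mu: "mu js > real N"
    and len: "length js \<ge> 3" and p: "p < length js"
  shows "(\<Prod>q\<in>{..<length js} - {p}. u (js!q)) \<le>
    (\<Sum>(q1, q2)\<in>position_pairs (length js) p. tail_term u N p q1 q2 js)"
proof -
  obtain q1 q2 where q: "q1 < q2" "q2 < length js" "q1 \<noteq> p" "q2 \<noteq> p"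
    "jnorm (js!q1) > real N" "jnorm (js!q2) > real N"
    using two_elements_avoiding[OF card_large_entries_ge_3[OF len mu]] by blast
  then have "(q1, q2) \<in> position_pairs (length js) p" by (simp add: position_pairs_def)
  then have "(\<lambda>(q1, q2). tail_term u N p q1 q2 js) (q1, q2) \<le>
      (\<Sum>(q1, q2)\<in>position_pairs (length js) p. tail_term u N p q1 q2 js)"
    by (rule member_le_sum) (auto intro: tail_term_nonneg[OF u0] simp: finite_position_pairs)
  moreover have "tail_term u N p q1 q2 js = (\<Prod>q\<in>{..<length js} - {p}. u (js!q))"
    using q mom by (simp add: tail_term_def)
  ultimately show ?thesis by simp
qed

lemma tail_terms_summable_bound:
  fixes u :: "'d::finite idx \<Rightarrow> real" and N k :: nat
  assumes u0: "\<And>j. u j \<ge> 0" and us: "u summable_on UNIV"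
  defines "D \<equiv> \<lambda>js. \<Sum>p<k. \<Sum>(q1, q2)\<in>position_pairs k p. tail_term u N p q1 q2 js"
    and "R \<equiv> infsum u {j. jnorm j > real N}" and "W \<equiv> infsum u UNIV"
  shows "D summable_on {js. length js = k}"
    and "infsum D {js. length js = k} \<le> 2 * real k ^ 3 * R\<^sup>2 * W ^ (k - 3)"
proof -
  define L where "L = {js :: 'd idx list. length js = k}"
  define b where "b = 2 * R\<^sup>2 * W ^ (k - 3)"
  have b0: "b \<ge> 0" by (simp add: b_def W_def infsum_nonneg u0)
  have pair: "tail_term u N p q1 q2 summable_on L \<and> infsum (tail_term u N p q1 q2) L \<le> b"
    if "p < k" "(q1, q2) \<in> position_pairs k p" for p q1 q2
    using tail_term_summable_bound[OF u0 us, of p k q1 q2 N] that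
    by (auto simp: position_pairs_def L_def b_def R_def W_def)
  have inner: "(\<lambda>js. \<Sum>(q1, q2)\<in>position_pairs k p. tail_term u N p q1 q2 js) summable_on L \<and>
      infsum (\<lambda>js. \<Sum>(q1, q2)\<in>position_pairs k p. tail_term u N p q1 q2 js) L \<le> real k * real k * b"
    if p: "p < k" for p
  proof -
    have "infsum (\<lambda>js. \<Sum>(q1, q2)\<in>position_pairs k p. tail_term u N p q1 q2 js) L =
        (\<Sum>(q1, q2)\<in>position_pairs k p. infsum (tail_term u N p q1 q2) L)"
      using infsum_sum[OF finite_position_pairs, where f = "\<lambda>(q1, q2). tail_term u N p q1 q2" and A = L] pair[OF p]
      by (simp add: case_prod_unfold)
    also have "\<dots> \<le> (\<Sum>(q1, q2)\<in>position_pairs k p. b)"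
      by (rule sum_mono) (use pair[OF p] in auto)
    also have "\<dots> \<le> real k * real k * b"
      using card_position_pairs_le[of k p] b0 by (simp add: mult_right_mono flip: of_nat_mult)
    finally show ?thesis
      using summable_on_sum[OF finite_position_pairs, where f = "\<lambda>(q1, q2). tail_term u N p q1 q2" and A = L] pair[OF p]
      by (simp add: case_prod_unfold)
  qed
  show "D summable_on {js. length js = k}"
    unfolding D_def L_def[symmetric] by (rule summable_on_sum) (use inner in auto)
  have "infsum D L = (\<Sum>p<k. infsum (\<lambda>js. \<Sum>(q1, q2)\<in>position_pairs k p. tail_term u N p q1 q2 js) L)"
    unfolding D_def by (rule infsum_sum) (use inner in auto)
  also have "\<dots> \<le> (\<Sum>p<k. real k * real k * b)"
    by (rule sum_mono) (use inner in auto)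
  finally show "infsum D {js. length js = k} \<le> 2 * real k ^ 3 * R\<^sup>2 * W ^ (k - 3)"
    by (simp add: L_def b_def power3_eq_cube mult_ac)
qed

lemma weighted_nonresonant_dmonomial_le:
  fixes z :: "'d::finite idx \<Rightarrow> complex" and N k :: nat
  assumes k3: "k \<ge> 3" and rho: "\<rho> \<ge> 0" and nf: "normal_form N k c" and F: "finite F"
    and len: "length js = k"
  shows "(\<Sum>j\<in>F. exp (\<rho> * jnorm j) * cmod (nonresonant_part c js * dmonomial z (bar j) js)) \<le>
    pnorm k c * (\<Sum>p<k. \<Sum>(q1, q2)\<in>position_pairs k p.
      tail_term (\<lambda>j. exp (\<rho> * jnorm j) * cmod (z j)) N p q1 q2 js)"
proof -
  define u where "u j = exp (\<rho> * jnorm j) * cmod (z j)" for j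
  have u0: "u j \<ge> 0" for j by (simp add: u_def)
  have hp: "hom_poly k c" using nf by (simp add: normal_form_def)
  have P0: "pnorm k c \<ge> 0" by (rule pnorm_nonneg[OF hp])
  show ?thesis
  proof (cases "resonant js \<or> c js = 0")
    case True
    have "(\<Sum>p<k. \<Sum>(q1, q2)\<in>position_pairs k p. tail_term u N p q1 q2 js) \<ge> 0"
      by (auto intro!: sum_nonneg tail_term_nonneg u0)
    with True show ?thesis using P0 by (auto simp: nonresonant_part_def u_def[abs_def])
  next
    case False
    have mom: "momentum js = 0" using False len hp unfolding hom_poly_def by blast
    have mu: "mu js > real N" using False nf unfolding normal_form_def by blast
    have "(\<Sum>j\<in>F. exp (\<rho> * jnorm j) * cmod (nonresonant_part c js * dmonomial z (bar j) js)) =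
        cmod (c js) * (\<Sum>j\<in>F. exp (\<rho> * jnorm j) * cmod (dmonomial z (bar j) js))"
      using False by (simp add: nonresonant_part_def norm_mult sum_distrib_left mult_ac)
    also have "\<dots> \<le> pnorm k c * (\<Sum>p<k. \<Prod>q\<in>{..<k} - {p}. u (js!q))"
      using sum_weighted_dmonomial_le[OF mom rho F, of z] cmod_le_pnorm[OF hp len mom] P0 len
      by (intro mult_mono) (auto simp: u_def intro!: sum_nonneg mult_nonneg_nonneg)
    also have "\<dots> \<le> pnorm k c * (\<Sum>p<k. \<Sum>(q1, q2)\<in>position_pairs k p. tail_term u N p q1 q2 js)"
      using prod_le_sum_tail_terms[OF u0 mom mu] len k3 P0 by (auto intro!: mult_left_mono sum_mono)
    finally show ?thesis by (simp add: u_def[abs_def])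
  qed
qed

lemma nonresonant_bound:
  fixes z :: "'d::finite idx \<Rightarrow> complex" and N k :: nat
  assumes k3: "k \<ge> 3" and rho: "\<rho> \<ge> 0" and nf: "normal_form N k c" and zL: "in_L \<rho> z"
    and F: "finite F"
  shows "(\<Sum>j\<in>F. exp (\<rho> * jnorm j) *
      cmod (\<Sum>\<^sub>\<infinity>js\<in>{js. length js = k}. nonresonant_part c js * dmonomial z (bar j) js))
    \<le> 2 * real k ^ 3 * pnorm k c * (remainder N \<rho> z)\<^sup>2 * (wnorm \<rho> z) ^ (k - 3)"
proof -
  define u where "u j = exp (\<rho> * jnorm j) * cmod (z j)" for j
  define e where "e j = exp (\<rho> * jnorm j)" for j :: "'d idx"
  define L where "L = {js :: 'd idx list. length js = k}"
  define P where "P = pnorm k c"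
  define D where "D js = (\<Sum>p<k. \<Sum>(q1, q2)\<in>position_pairs k p. tail_term u N p q1 q2 js)" for js
  define h where "h j js = nonresonant_part c js * dmonomial z (bar j) js" for j js
  have u0: "u j \<ge> 0" for j by (simp add: u_def)
  have us: "u summable_on UNIV" using zL by (simp add: in_L_def u_def[abs_def])
  have hp: "hom_poly k c" using nf by (simp add: normal_form_def)
  have P0: "P \<ge> 0" unfolding P_def by (rule pnorm_nonneg[OF hp])
  obtain B where B: "\<forall>js. cmod (c js) \<le> B" using hom_poly_bounded[OF hp] by blast
  moreover have "0 \<le> B" using B norm_ge_zero order_trans by blast
  ultimately have "cmod (nonresonant_part c js) \<le> B" for js
    by (simp add: nonresonant_part_def)
  from has_sum_dmonomial[OF in_L_imp_summable_cmod[OF zL rho] this]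
  have "h j summable_on L" for j unfolding h_def L_def by (rule has_sum_imp_summable)
  then have hs: "(\<lambda>js. cmod (h j js)) summable_on L" for j
    by (simp add: summable_on_iff_abs_summable_on_complex)
  have DL: "D summable_on L"
    "infsum D L \<le> 2 * real k ^ 3 * (remainder N \<rho> z)\<^sup>2 * (wnorm \<rho> z) ^ (k - 3)"
    using tail_terms_summable_bound[OF u0 us, where k = k and N = N] unfolding D_def L_def
    by (simp_all add: remainder_def wnorm_def u_def[abs_def])
  have pointwise: "(\<Sum>j\<in>F. e j * cmod (h j js)) \<le> P * D js" if "js \<in> L" for js
    using weighted_nonresonant_dmonomial_le[OF k3 rho nf F, of js z] that
    by (simp add: e_def h_def P_def D_def u_def[abs_def] L_def)
  have "(\<Sum>j\<in>F. e j * cmod (infsum (h j) L)) \<le> (\<Sum>j\<in>F. e j * infsum (\<lambda>js. cmod (h j js)) L)"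
    by (intro sum_mono mult_left_mono norm_infsum_bound hs) (simp add: e_def)
  also have "\<dots> = infsum (\<lambda>js. \<Sum>j\<in>F. e j * cmod (h j js)) L"
    by (simp add: infsum_sum[OF F] infsum_cmult_right hs summable_on_cmult_right)
  also have "\<dots> \<le> infsum (\<lambda>js. P * D js) L"
    by (rule infsum_mono) (use pointwise DL(1) in \<open>auto intro!: summable_on_sum[OF F] summable_on_cmult_right hs\<close>)
  also have "\<dots> \<le> P * (2 * real k ^ 3 * (remainder N \<rho> z)\<^sup>2 * (wnorm \<rho> z) ^ (k - 3))"
    using DL P0 by (simp add: infsum_cmult_right mult_left_mono)
  finally show ?thesis by (simp add: e_def h_def[abs_def] L_def P_def mult_ac)
qed

section \<open>A Gronwall-type estimate\<close>

lemma sqrt_add_square_le: "X \<ge> 0 \<Longrightarrow> (\<epsilon>::real) \<ge> 0 \<Longrightarrow> sqrt (X + \<epsilon>\<^sup>2) \<le> sqrt X + \<epsilon>"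
  by (rule real_le_lsqrt) (auto simp: power2_sum)

lemma has_real_derivative_sqrt_cmod_square:
  fixes f :: "real \<Rightarrow> complex"
  assumes f: "(f has_vector_derivative f') (at s within S)" and eps: "\<epsilon> > 0"
  shows "((\<lambda>s. sqrt ((cmod (f s))\<^sup>2 + \<epsilon>\<^sup>2)) has_real_derivative
      Re (cnj (f s) * f') / sqrt ((cmod (f s))\<^sup>2 + \<epsilon>\<^sup>2)) (at s within S)"
proof -
  have parts: "((\<lambda>x. Re (f x)) has_real_derivative Re f') (at s within S)"
    "((\<lambda>x. Im (f x)) has_real_derivative Im f') (at s within S)"
    using f by (simp_all add: has_vector_derivative_complex_iff)
  have "((\<lambda>s. (Re (f s))\<^sup>2 + (Im (f s))\<^sup>2 + \<epsilon>\<^sup>2) has_real_derivative 2 * Re (cnj (f s) * f'))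
      (at s within S)"
    by (rule derivative_eq_intros parts refl)+ (simp add: algebra_simps)
  moreover have pos: "(Re (f s))\<^sup>2 + (Im (f s))\<^sup>2 + \<epsilon>\<^sup>2 > 0"
    using eps by (simp add: add_nonneg_pos)
  ultimately have "((\<lambda>s. sqrt ((Re (f s))\<^sup>2 + (Im (f s))\<^sup>2 + \<epsilon>\<^sup>2)) has_real_derivative
      inverse (sqrt ((Re (f s))\<^sup>2 + (Im (f s))\<^sup>2 + \<epsilon>\<^sup>2)) / 2 * (2 * Re (cnj (f s) * f'))) (at s within S)"
    by (intro DERIV_chain2[OF DERIV_real_sqrt]) auto
  then show ?thesis
    unfolding cmod_power2 by (rule DERIV_cong) (use pos in \<open>simp add: field_simps\<close>)
qed

lemma Re_cnj_mult_div_sqrt_le: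
  assumes "Re (cnj w * w') \<le> cmod w * g" "g \<ge> 0" "\<epsilon> > 0"
  shows "Re (cnj w * w') / sqrt ((cmod w)\<^sup>2 + \<epsilon>\<^sup>2) \<le> g"
proof -
  have pos: "sqrt ((cmod w)\<^sup>2 + \<epsilon>\<^sup>2) > 0"
    using assms(3) by (intro real_sqrt_gt_zero add_nonneg_pos) auto
  have "cmod w \<le> sqrt ((cmod w)\<^sup>2 + \<epsilon>\<^sup>2)" by (rule real_le_rsqrt) simp
  then have "Re (cnj w * w') \<le> sqrt ((cmod w)\<^sup>2 + \<epsilon>\<^sup>2) * g"
    using assms(1,2) by (meson mult_right_mono order_trans)
  then show ?thesis using pos by (simp add: pos_divide_le_eq mult.commute)
qed

text \<open>The \<open>\<epsilon>\<close> keeps the square roots differentiable where some \<open>f j\<close> vanishes.\<close>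
lemma regularized_norms_growth_bound:
  fixes f f' :: "'j \<Rightarrow> real \<Rightarrow> complex" and e :: "'j \<Rightarrow> real" and g :: "'j \<Rightarrow> real \<Rightarrow> real"
  assumes F: "finite F" and t: "0 \<le> t" "t \<le> T" and eps: "\<epsilon> > 0"
    and deriv: "\<And>j s. j \<in> F \<Longrightarrow> s \<in> {0..T} \<Longrightarrow> (f j has_vector_derivative f' j s) (at s within {0..T})"
    and B: "continuous_on {0..T} B"
    and e0: "\<And>j. e j \<ge> 0"
    and ineq: "\<And>j s. j \<in> F \<Longrightarrow> s \<in> {0..T} \<Longrightarrow> Re (cnj (f j s) * f' j s) \<le> cmod (f j s) * g j s"
    and g0: "\<And>j s. j \<in> F \<Longrightarrow> s \<in> {0..T} \<Longrightarrow> g j s \<ge> 0"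
    and gB: "\<And>s. s \<in> {0..T} \<Longrightarrow> (\<Sum>j\<in>F. e j * g j s) \<le> B s"
  shows "(\<Sum>j\<in>F. e j * sqrt ((cmod (f j t))\<^sup>2 + \<epsilon>\<^sup>2)) \<le>
    (\<Sum>j\<in>F. e j * sqrt ((cmod (f j 0))\<^sup>2 + \<epsilon>\<^sup>2)) + integral {0..t} B"
proof -
  define q where "q j s = sqrt ((cmod (f j s))\<^sup>2 + \<epsilon>\<^sup>2)" for j s
  define I where "I s = integral {0..s} B" for s
  define \<phi> where "\<phi> s = (\<Sum>j\<in>F. e j * q j s) - I s" for s
  have I_deriv: "(I has_real_derivative B s) (at s within {0..T})" if "s \<in> {0..T}" for s
    unfolding I_def has_real_derivative_iff_has_vector_derivative
    by (rule integral_has_vector_derivative[OF B that])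
  have \<phi>_deriv: "(\<phi> has_real_derivative (\<Sum>j\<in>F. e j * (Re (cnj (f j s) * f' j s) / q j s)) - B s)
      (at s within {0..T})" if "s \<in> {0..T}" for s
    unfolding \<phi>_def q_def
    by (intro DERIV_diff DERIV_sum DERIV_cmult has_real_derivative_sqrt_cmod_square deriv eps that I_deriv)
  have \<phi>_cont: "continuous_on {0..T} \<phi>"
    using \<phi>_deriv by (meson DERIV_continuous continuous_on_eq_continuous_within)
  have "\<phi> t \<le> \<phi> 0"
  proof (rule DERIV_nonpos_imp_decreasing_open[OF t(1)])
    show "continuous_on {0..t} \<phi>" by (rule continuous_on_subset[OF \<phi>_cont]) (use t in auto)
  next
    fix x assume x: "0 < x" "x < t"
    then have xT: "x \<in> {0..T}" and xi: "x \<in> interior {0..T}" using t by auto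
    have deriv_x: "(\<phi> has_real_derivative (\<Sum>j\<in>F. e j * (Re (cnj (f j x) * f' j x) / q j x)) - B x) (at x)"
      using \<phi>_deriv[OF xT] by (simp add: at_within_interior[OF xi])
    have "Re (cnj (f j x) * f' j x) / q j x \<le> g j x" if j: "j \<in> F" for j
      unfolding q_def using ineq[OF j xT] g0[OF j xT] eps by (rule Re_cnj_mult_div_sqrt_le)
    then have "(\<Sum>j\<in>F. e j * (Re (cnj (f j x) * f' j x) / q j x)) \<le> (\<Sum>j\<in>F. e j * g j x)"
      by (intro sum_mono mult_left_mono e0)
    then have "(\<Sum>j\<in>F. e j * (Re (cnj (f j x) * f' j x) / q j x)) - B x \<le> 0"
      using gB[OF xT] by linarith
    with deriv_x show "\<exists>y. (\<phi> has_real_derivative y) (at x) \<and> y \<le> 0" by blast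
  qed
  then show ?thesis by (simp add: \<phi>_def q_def I_def)
qed

lemma weighted_norms_growth_bound:
  fixes f f' :: "'j \<Rightarrow> real \<Rightarrow> complex" and e :: "'j \<Rightarrow> real" and g :: "'j \<Rightarrow> real \<Rightarrow> real"
  assumes F: "finite F" and t: "0 \<le> t" "t \<le> T"
    and deriv: "\<And>j s. j \<in> F \<Longrightarrow> s \<in> {0..T} \<Longrightarrow> (f j has_vector_derivative f' j s) (at s within {0..T})"
    and B: "continuous_on {0..T} B"
    and e0: "\<And>j. e j \<ge> 0"
    and ineq: "\<And>j s. j \<in> F \<Longrightarrow> s \<in> {0..T} \<Longrightarrow> Re (cnj (f j s) * f' j s) \<le> cmod (f j s) * g j s"
    and g0: "\<And>j s. j \<in> F \<Longrightarrow> s \<in> {0..T} \<Longrightarrow> g j s \<ge> 0"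
    and gB: "\<And>s. s \<in> {0..T} \<Longrightarrow> (\<Sum>j\<in>F. e j * g j s) \<le> B s"
  shows "(\<Sum>j\<in>F. e j * cmod (f j t)) \<le> (\<Sum>j\<in>F. e j * cmod (f j 0)) + integral {0..t} B"
proof (rule field_le_epsilon)
  fix d :: real assume d: "d > 0"
  define C where "C = (\<Sum>j\<in>F. e j)"
  define \<epsilon> where "\<epsilon> = d / (C + 1)"
  have C0: "C \<ge> 0" by (simp add: C_def e0 sum_nonneg)
  then have eps: "\<epsilon> > 0" using d by (simp add: \<epsilon>_def)
  have sqrt_le: "sqrt ((cmod (f j 0))\<^sup>2 + \<epsilon>\<^sup>2) \<le> cmod (f j 0) + \<epsilon>" for j
    using sqrt_add_square_le[of "(cmod (f j 0))\<^sup>2" \<epsilon>] eps by simp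
  have "(\<Sum>j\<in>F. e j * cmod (f j t)) \<le> (\<Sum>j\<in>F. e j * sqrt ((cmod (f j t))\<^sup>2 + \<epsilon>\<^sup>2))"
    by (intro sum_mono mult_left_mono e0) (simp add: real_le_rsqrt)
  also have "\<dots> \<le> (\<Sum>j\<in>F. e j * sqrt ((cmod (f j 0))\<^sup>2 + \<epsilon>\<^sup>2)) + integral {0..t} B"
    by (rule regularized_norms_growth_bound[OF F t eps deriv B e0 ineq g0 gB])
  also have "(\<Sum>j\<in>F. e j * sqrt ((cmod (f j 0))\<^sup>2 + \<epsilon>\<^sup>2)) \<le> (\<Sum>j\<in>F. e j * (cmod (f j 0) + \<epsilon>))"
    using sqrt_le by (intro sum_mono mult_left_mono e0)
  also have "\<dots> = (\<Sum>j\<in>F. e j * cmod (f j 0)) + \<epsilon> * C"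
    by (simp add: C_def algebra_simps sum.distrib sum_distrib_left)
  also have "\<epsilon> * C \<le> d" using d C0 by (simp add: \<epsilon>_def field_simps)
  finally show "(\<Sum>j\<in>F. e j * cmod (f j t)) \<le> (\<Sum>j\<in>F. e j * cmod (f j 0)) + integral {0..t} B + d"
    by simp
qed

lemma infsum_weighted_cmod_diff_le:
  fixes x y :: "('d::finite) idx \<Rightarrow> complex"
  assumes xL: "in_L \<rho> x" and yL: "in_L \<rho> y"
  shows "\<bar>infsum (\<lambda>j. exp (\<rho> * jnorm j) * cmod (x j)) S - infsum (\<lambda>j. exp (\<rho> * jnorm j) * cmod (y j)) S\<bar>
     \<le> wnorm \<rho> (\<lambda>j. x j - y j)"
proof -
  define ex where "ex j = exp (\<rho> * jnorm j) * cmod (x j)" for j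
  define ey where "ey j = exp (\<rho> * jnorm j) * cmod (y j)" for j
  define ed where "ed j = exp (\<rho> * jnorm j) * cmod (x j - y j)" for j
  have exs: "ex summable_on UNIV" using xL by (simp add: in_L_def ex_def[abs_def])
  have eys: "ey summable_on UNIV" using yL by (simp add: in_L_def ey_def[abs_def])
  have eds: "ed summable_on UNIV"
  proof (rule summable_on_comparison_test[OF summable_on_add[OF exs eys]])
    fix j
    have "cmod (x j - y j) \<le> cmod (x j) + cmod (y j)" by (rule norm_triangle_ineq4)
    then show "ed j \<le> ex j + ey j" unfolding ed_def ex_def ey_def
      by (simp add: distrib_left[symmetric])
  qed (simp add: ed_def)
  have exS: "ex summable_on S" by (rule summable_on_subset_banach[OF exs]) simp
  have eyS: "ey summable_on S" by (rule summable_on_subset_banach[OF eys]) simp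
  have edS: "ed summable_on S" by (rule summable_on_subset_banach[OF eds]) simp
  have pt: "\<bar>ex j - ey j\<bar> \<le> ed j" for j
  proof -
    have "\<bar>cmod (x j) - cmod (y j)\<bar> \<le> cmod (x j - y j)" by (rule norm_triangle_ineq3)
    then show ?thesis unfolding ex_def ey_def ed_def
      by (simp add: right_diff_distrib[symmetric] abs_mult)
  qed
  have dS: "(\<lambda>j. ex j - ey j) summable_on S"
    using summable_on_add[OF exS summable_on_uminus[THEN iffD2, OF eyS]] by simp
  have "infsum ex S - infsum ey S = infsum (\<lambda>j. ex j - ey j) S"
    using infsum_add[OF exS summable_on_uminus[THEN iffD2, OF eyS]] by (simp add: infsum_uminus)
  also have "\<bar>\<dots>\<bar> \<le> infsum (\<lambda>j. \<bar>ex j - ey j\<bar>) S"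
  proof -
    have "(\<lambda>j. norm (ex j - ey j)) summable_on S"
      by (rule summable_on_comparison_test[OF edS]) (use pt in auto)
    from norm_infsum_bound[OF this] show ?thesis by simp
  qed
  also have "\<dots> \<le> infsum ed S"
    by (rule infsum_mono) (use pt edS in \<open>auto intro: summable_on_comparison_test[OF edS]\<close>)
  also have "\<dots> \<le> infsum ed UNIV"
    by (rule infsum_mono_neutral[OF edS eds]) (auto simp: ed_def)
  also have "\<dots> = wnorm \<rho> (\<lambda>j. x j - y j)" by (simp add: wnorm_def ed_def[abs_def])
  finally show ?thesis by (simp add: ex_def[abs_def] ey_def[abs_def])
qed

lemma ham_solution_continuous_weighted_sum:
  fixes z :: "real \<Rightarrow> ('d::finite) idx \<Rightarrow> complex"
  assumes hs: "ham_solution \<rho> v k c T z"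
  shows "continuous_on {0..T} (\<lambda>s. infsum (\<lambda>j. exp (\<rho> * jnorm j) * cmod (z s j)) S)"
proof -
  have inL: "\<And>s. s \<in> {0..T} \<Longrightarrow> in_L \<rho> (z s)" using hs by (simp add: ham_solution_def)
  have lim: "\<And>t. t \<in> {0..T} \<Longrightarrow> ((\<lambda>s. wnorm \<rho> (\<lambda>j. z s j - z t j)) \<longlongrightarrow> 0) (at t within {0..T})"
    using hs by (simp add: ham_solution_def)
  show ?thesis unfolding continuous_on_eq_continuous_within
  proof
    fix t assume t: "t \<in> {0..T}"
    show "continuous (at t within {0..T}) (\<lambda>s. infsum (\<lambda>j. exp (\<rho> * jnorm j) * cmod (z s j)) S)"
      unfolding continuous_within
    proof (rule LIM_zero_cancel, rule tendsto_0_le[OF lim[OF t], where K=1])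
      show "\<forall>\<^sub>F s in at t within {0..T}. norm (infsum (\<lambda>j. exp (\<rho> * jnorm j) * cmod (z s j)) S -
          infsum (\<lambda>j. exp (\<rho> * jnorm j) * cmod (z t j)) S) \<le> norm (wnorm \<rho> (\<lambda>j. z s j - z t j)) * 1"
        unfolding eventually_at_filter
      proof (rule always_eventually, intro allI impI)
        fix s assume "s \<noteq> t" "s \<in> {0..T}"
        then have "\<bar>infsum (\<lambda>j. exp (\<rho> * jnorm j) * cmod (z s j)) S - infsum (\<lambda>j. exp (\<rho> * jnorm j) * cmod (z t j)) S\<bar>
             \<le> wnorm \<rho> (\<lambda>j. z s j - z t j)"
          by (intro infsum_weighted_cmod_diff_le inL t)
        then show "norm (infsum (\<lambda>j. exp (\<rho> * jnorm j) * cmod (z s j)) S -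
          infsum (\<lambda>j. exp (\<rho> * jnorm j) * cmod (z t j)) S) \<le> norm (wnorm \<rho> (\<lambda>j. z s j - z t j)) * 1"
          by simp
      qed
    qed
  qed
qed

lemma Re_cnj_mult_rotation_le:
  assumes "\<sigma> = 1 \<or> \<sigma> = -1"
  shows "Re (cnj w * (\<sigma> * \<i> * (of_real a * w + (w * of_real r + h)))) \<le> cmod w * cmod h"
proof -
  have "cnj w * (\<sigma> * \<i> * (of_real a * w + (w * of_real r + h))) =
      \<sigma> * \<i> * of_real (a + r) * (w * cnj w) + \<sigma> * \<i> * cnj w * h"
    by (simp add: algebra_simps)
  also have "w * cnj w = of_real ((Re w)\<^sup>2 + (Im w)\<^sup>2)" by (rule complex_mult_cnj)
  finally have split: "cnj w * (\<sigma> * \<i> * (of_real a * w + (w * of_real r + h))) =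
      \<sigma> * \<i> * of_real ((a + r) * ((Re w)\<^sup>2 + (Im w)\<^sup>2)) + \<sigma> * \<i> * cnj w * h"
    by simp
  have "Re (\<sigma> * \<i> * of_real ((a + r) * ((Re w)\<^sup>2 + (Im w)\<^sup>2))) = 0"
    using assms by auto
  moreover have "Re (\<sigma> * \<i> * cnj w * h) \<le> cmod (\<sigma> * \<i> * cnj w * h)"
    by (rule complex_Re_le_cmod)
  moreover have "cmod (\<sigma> * \<i> * cnj w * h) = cmod w * cmod h"
    using assms by (auto simp: norm_mult)
  ultimately show ?thesis unfolding split by (simp only: plus_complex.sel)
qed

lemma ham_solution_has_vector_derivative:
  assumes hs: "ham_solution \<rho> v k c T z" and s: "s \<in> {0..T}"
  shows "((\<lambda>s. z s j) has_vector_derivative (if snd j then - \<i> else \<i>) *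
      (of_real (omega v (fst j)) * z s j + dpoly k c (z s) (bar j))) (at s within {0..T})"
proof -
  obtain a b where j: "j = (a, b)" by (cases j)
  have "((\<lambda>s. z s (a, True)) has_vector_derivative
          - \<i> * (of_real (omega v a) * z s (a, True) + dpoly k c (z s) (a, False))) (at s within {0..T})"
    "((\<lambda>s. z s (a, False)) has_vector_derivative
          \<i> * (of_real (omega v a) * z s (a, False) + dpoly k c (z s) (a, True))) (at s within {0..T})"
    using hs s unfolding ham_solution_def by blast+
  then show ?thesis by (cases b) (simp_all add: j bar_def)
qed

lemma dpoly_bar_eq_real_multiple_add:
  fixes z :: "'d::finite idx \<Rightarrow> complex"
  assumes hp: "hom_poly k c" and real: "is_real_seq z" and zs: "(\<lambda>j. cmod (z j)) summable_on UNIV"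
  obtains r :: real where "dpoly k c z (bar j) =
    z j * r + (\<Sum>\<^sub>\<infinity>js\<in>{js. length js = k}. nonresonant_part c js * dmonomial z (bar j) js)"
proof -
  define L where "L = {js :: 'd idx list. length js = k}"
  obtain B where B: "\<forall>js. cmod (c js) \<le> B" using hom_poly_bounded[OF hp] by blast
  moreover have "0 \<le> B" using B norm_ge_zero order_trans by blast
  ultimately have "cmod (resonant_part c js) \<le> B" "cmod (nonresonant_part c js) \<le> B" for js
    by (simp_all add: resonant_part_def nonresonant_part_def)
  then have res: "(\<lambda>js. resonant_part c js * dmonomial z (bar j) js) summable_on L"
    and nonres: "(\<lambda>js. nonresonant_part c js * dmonomial z (bar j) js) summable_on L"
    unfolding L_def by (blast intro: has_sum_imp_summable has_sum_dmonomial[OF zs])+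
  have "dpoly k c z (bar j) = (\<Sum>\<^sub>\<infinity>js\<in>L. c js * dmonomial z (bar j) js)"
    unfolding L_def using B by (intro infsumI[symmetric] has_sum_dmonomial[OF zs]) blast
  also have "\<dots> = (\<Sum>\<^sub>\<infinity>js\<in>L. resonant_part c js * dmonomial z (bar j) js +
      nonresonant_part c js * dmonomial z (bar j) js)"
    by (rule infsum_cong) (simp add: resonant_part_def nonresonant_part_def)
  also have "\<dots> = (\<Sum>\<^sub>\<infinity>js\<in>L. resonant_part c js * dmonomial z (bar j) js) +
      (\<Sum>\<^sub>\<infinity>js\<in>L. nonresonant_part c js * dmonomial z (bar j) js)"
    by (rule infsum_add[OF res nonres])
  finally show ?thesis
    using infsum_resonant_part_dmonomial_bar[OF real, where c = c and k = k and j = j] hp that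
    unfolding L_def hom_poly_def by metis
qed

lemma ham_solution_finite_sum_bound:
  fixes N k :: nat and z :: "real \<Rightarrow> 'd::finite idx \<Rightarrow> complex"
  assumes k3: "k \<ge> 3" and rho: "\<rho> > 0" and nf: "normal_form N k c"
    and hs: "ham_solution \<rho> v k c T z" and t: "t \<in> {0..T}" and F: "finite F"
  shows "(\<Sum>j\<in>F. exp (\<rho> * jnorm j) * cmod (z t j)) \<le> (\<Sum>j\<in>F. exp (\<rho> * jnorm j) * cmod (z 0 j)) +
    integral {0..t} (\<lambda>s. 4 * real k ^ 3 * pnorm k c * ((remainder N \<rho> (z s))\<^sup>2 * wnorm \<rho> (z s) ^ (k - 3)))"
proof -
  define h where "h j s = (\<Sum>\<^sub>\<infinity>js\<in>{js. length js = k}. nonresonant_part c js * dmonomial (z s) (bar j) js)"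
    for j s
  have hp: "hom_poly k c" using nf by (simp add: normal_form_def)
  have zL: "in_L \<rho> (z s)" and real: "is_real_seq (z s)" if "s \<in> {0..T}" for s
    using hs that by (auto simp: ham_solution_def)
  show ?thesis
  proof (rule weighted_norms_growth_bound[where f = "\<lambda>j s. z s j" and g = "\<lambda>j s. cmod (h j s)"
        and f' = "\<lambda>j s. (if snd j then - \<i> else \<i>) * (of_real (omega v (fst j)) * z s j + dpoly k c (z s) (bar j))"])
    show "continuous_on {0..T}
        (\<lambda>s. 4 * real k ^ 3 * pnorm k c * ((remainder N \<rho> (z s))\<^sup>2 * wnorm \<rho> (z s) ^ (k - 3)))"
      unfolding remainder_def wnorm_def
      by (intro continuous_intros ham_solution_continuous_weighted_sum[OF hs])
  next
    fix j s assume s: "s \<in> {0..T}"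
    obtain r :: real where dpoly: "dpoly k c (z s) (bar j) = z s j * r + h j s"
      unfolding h_def
      by (rule dpoly_bar_eq_real_multiple_add[OF hp real[OF s] in_L_imp_summable_cmod[OF zL[OF s]]])
        (use rho in simp)
    have rotation: "(if snd j then - \<i> else \<i>) = (if snd j then -1 else 1) * \<i>" by simp
    show "Re (cnj (z s j) * ((if snd j then - \<i> else \<i>) *
        (of_real (omega v (fst j)) * z s j + dpoly k c (z s) (bar j)))) \<le> cmod (z s j) * cmod (h j s)"
      unfolding rotation dpoly by (rule Re_cnj_mult_rotation_le) simp
  next
    fix s assume s: "s \<in> {0..T}"
    have "(\<Sum>j\<in>F. exp (\<rho> * jnorm j) * cmod (h j s)) \<le>
        2 * real k ^ 3 * pnorm k c * (remainder N \<rho> (z s))\<^sup>2 * wnorm \<rho> (z s) ^ (k - 3)"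
      unfolding h_def using rho by (intro nonresonant_bound[OF k3 _ nf zL[OF s] F]) simp
    also have "\<dots> \<le> 4 * real k ^ 3 * pnorm k c * ((remainder N \<rho> (z s))\<^sup>2 * wnorm \<rho> (z s) ^ (k - 3))"
      using pnorm_nonneg[OF hp] by (simp add: wnorm_def infsum_nonneg)
    finally show "(\<Sum>j\<in>F. exp (\<rho> * jnorm j) * cmod (h j s)) \<le>
        4 * real k ^ 3 * pnorm k c * ((remainder N \<rho> (z s))\<^sup>2 * wnorm \<rho> (z s) ^ (k - 3))" .
  qed (use F t in \<open>simp_all add: ham_solution_has_vector_derivative[OF hs]\<close>)
qed

lemma ham_solution_weighted_sum_bound:
  fixes N k :: nat and z :: "real \<Rightarrow> 'd::finite idx \<Rightarrow> complex"
  assumes k3: "k \<ge> 3" and rho: "\<rho> > 0" and nf: "normal_form N k c"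
    and hs: "ham_solution \<rho> v k c T z" and t: "t \<in> {0..T}"
  shows "(\<Sum>\<^sub>\<infinity>j\<in>S. exp (\<rho> * jnorm j) * cmod (z t j)) \<le> (\<Sum>\<^sub>\<infinity>j\<in>S. exp (\<rho> * jnorm j) * cmod (z 0 j)) +
    4 * real k ^ 3 * pnorm k c * integral {0..t} (\<lambda>s. (remainder N \<rho> (z s))\<^sup>2 * wnorm \<rho> (z s) ^ (k - 3))"
proof (rule infsum_le_finite_sums)
  have "in_L \<rho> (z s)" if "s \<in> {0..T}" for s using hs that by (simp add: ham_solution_def)
  then have summable: "(\<lambda>j. exp (\<rho> * jnorm j) * cmod (z s j)) summable_on S" if "s \<in> {0..T}" for s
    using that by (auto simp: in_L_def intro: summable_on_subset_banach)
  then show "(\<lambda>j. exp (\<rho> * jnorm j) * cmod (z t j)) summable_on S" using t by blast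
  fix F assume F: "finite F" "F \<subseteq> S"
  have "(\<Sum>j\<in>F. exp (\<rho> * jnorm j) * cmod (z 0 j)) \<le> (\<Sum>\<^sub>\<infinity>j\<in>S. exp (\<rho> * jnorm j) * cmod (z 0 j))"
    using summable[of 0] t F by (intro finite_sum_le_infsum) auto
  moreover have "(\<Sum>j\<in>F. exp (\<rho> * jnorm j) * cmod (z t j)) \<le> (\<Sum>j\<in>F. exp (\<rho> * jnorm j) * cmod (z 0 j)) +
      4 * real k ^ 3 * pnorm k c * integral {0..t} (\<lambda>s. (remainder N \<rho> (z s))\<^sup>2 * wnorm \<rho> (z s) ^ (k - 3))"
    using ham_solution_finite_sum_bound[OF k3 rho nf hs t F(1)] by simp
  ultimately show "(\<Sum>j\<in>F. exp (\<rho> * jnorm j) * cmod (z t j)) \<le> (\<Sum>\<^sub>\<infinity>j\<in>S. exp (\<rho> * jnorm j) * cmod (z 0 j)) +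
      4 * real k ^ 3 * pnorm k c * integral {0..t} (\<lambda>s. (remainder N \<rho> (z s))\<^sup>2 * wnorm \<rho> (z s) ^ (k - 3))"
    by linarith
qed

theorem proposition2p3:
  fixes N k :: nat and \<rho> T t :: real
    and v :: "int ^ 'd::finite \<Rightarrow> real"
    and c :: "'d idx list \<Rightarrow> complex"
    and z :: "real \<Rightarrow> 'd idx \<Rightarrow> complex"
  assumes "k \<ge> 3" and "\<rho> > 0"
    and "normal_form N k c"
    and "ham_solution \<rho> v k c T z"
    and "t \<in> {0..T}"
  shows "remainder N \<rho> (z t) \<le> remainder N \<rho> (z 0) + 4 * real k ^ 3 * pnorm k c *
           integral {0..t} (\<lambda>s. (remainder N \<rho> (z s))\<^sup>2 * wnorm \<rho> (z s) ^ (k - 3)) \<and>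
         wnorm \<rho> (z t) \<le> wnorm \<rho> (z 0) + 4 * real k ^ 3 * pnorm k c *
           integral {0..t} (\<lambda>s. (remainder N \<rho> (z s))\<^sup>2 * wnorm \<rho> (z s) ^ (k - 3))"
  using ham_solution_weighted_sum_bound[OF assms, where S = "{j. jnorm j > real N}"]
    ham_solution_weighted_sum_bound[OF assms, where S = UNIV]
  by (simp add: remainder_def wnorm_def)

end
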